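(* Let $(B,\mathbb{T},\omega)$ be a $C^*$-dynamical system with $B\subset B(H)$ for a Hilbert space $H$, and let $A$ be a maximal (abelian $\mathbb{T}$-invariant $*$-subalgebra) of $B$. Then $\pi_0(A'\cap B)\subset A$.
   Context: A $C^*$-dynamical system $(B,\mathbb{T},\omega)$: $B$ a $C^*$-algebra, $\omega:\mathbb{T}\to\mathrm{Aut}(B)$ a homomorphism with $t\mapsto\omega_t(b)$ norm-continuous for each $b$. A maximal (abelian $\mathbb{T}$-invariant $*$-subalgebra) is a $*$-subalgebra which is abelian, satisfies $\omega_t(A)\subset A$ for all $t$, and is maximal among such. $A'$ denotes the commutant of $A$ in $B(H)$. $\pi_0(b)=\int_{\mathbb{T}}\omega_t(b)\,dt$, with $dt$ normalised Haar measure. *)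

theory Defs
  imports "HOL-Analysis.Analysis"
begin

text \<open>A complex Hilbert space H is modelled as a real Hilbert space (type class
real_inner + complete_space, inner product = real part of the complex inner product)
together with an orthogonal complex structure J (multiplication by i).
B(H) is then the set of bounded real-linear operators commuting with J, i.e. the
bounded complex-linear operators.\<close>

definition complex_structure :: "('h::{real_inner,complete_space} \<Rightarrow>\<^sub>L 'h) \<Rightarrow> bool" where
  "complex_structure J \<longleftrightarrow> J o\<^sub>L J = - id_blinfun \<and> (\<forall>x y. inner (J x) (J y) = inner x y)"

definition BH :: "('h::{real_inner,complete_space} \<Rightarrow>\<^sub>L 'h) \<Rightarrow> ('h \<Rightarrow>\<^sub>L 'h) set" where
  "BH J = {T. T o\<^sub>L J = J o\<^sub>L T}"

definition cscale :: "('h::{real_inner,complete_space} \<Rightarrow>\<^sub>L 'h) \<Rightarrow> complex \<Rightarrow> ('h \<Rightarrow>\<^sub>L 'h) \<Rightarrow> ('h \<Rightarrow>\<^sub>L 'h)" where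
  "cscale J c T = Re c *\<^sub>R T + Im c *\<^sub>R (J o\<^sub>L T)"

definition adj :: "('h::{real_inner,complete_space} \<Rightarrow>\<^sub>L 'h) \<Rightarrow> ('h \<Rightarrow>\<^sub>L 'h)" where
  "adj T = (THE S :: 'h \<Rightarrow>\<^sub>L 'h. \<forall>x y. inner (T x) y = inner x (blinfun_apply S y))"

definition star_subalgebra :: "('h::{real_inner,complete_space} \<Rightarrow>\<^sub>L 'h) \<Rightarrow> ('h \<Rightarrow>\<^sub>L 'h) set \<Rightarrow> bool" where
  "star_subalgebra J S \<longleftrightarrow> S \<subseteq> BH J \<and> 0 \<in> S \<and>
     (\<forall>x\<in>S. \<forall>y\<in>S. x + y \<in> S \<and> x o\<^sub>L y \<in> S) \<and>
     (\<forall>c. \<forall>x\<in>S. cscale J c x \<in> S) \<and> (\<forall>x\<in>S. adj x \<in> S)"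

definition cstar_subalgebra :: "('h::{real_inner,complete_space} \<Rightarrow>\<^sub>L 'h) \<Rightarrow> ('h \<Rightarrow>\<^sub>L 'h) set \<Rightarrow> bool" where
  "cstar_subalgebra J S \<longleftrightarrow> star_subalgebra J S \<and> closed S"

definition star_automorphism :: "('h::{real_inner,complete_space} \<Rightarrow>\<^sub>L 'h) \<Rightarrow> ('h \<Rightarrow>\<^sub>L 'h) set
     \<Rightarrow> (('h \<Rightarrow>\<^sub>L 'h) \<Rightarrow> ('h \<Rightarrow>\<^sub>L 'h)) \<Rightarrow> bool" where
  "star_automorphism J B \<alpha> \<longleftrightarrow> bij_betw \<alpha> B B \<and>
     (\<forall>x\<in>B. \<forall>y\<in>B. \<alpha> (x + y) = \<alpha> x + \<alpha> y \<and> \<alpha> (x o\<^sub>L y) = \<alpha> x o\<^sub>L \<alpha> y) \<and>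
     (\<forall>c. \<forall>x\<in>B. \<alpha> (cscale J c x) = cscale J c (\<alpha> x)) \<and>
     (\<forall>x\<in>B. \<alpha> (adj x) = adj (\<alpha> x))"

text \<open>C*-dynamical system (B, T, \<omega>), with T = R/Z parametrised by real t (period 1):
\<omega> is a homomorphism T \<rightarrow> Aut(B), pointwise norm-continuous.\<close>
definition cstar_dynamical_system :: "('h::{real_inner,complete_space} \<Rightarrow>\<^sub>L 'h) \<Rightarrow> ('h \<Rightarrow>\<^sub>L 'h) set
     \<Rightarrow> (real \<Rightarrow> ('h \<Rightarrow>\<^sub>L 'h) \<Rightarrow> ('h \<Rightarrow>\<^sub>L 'h)) \<Rightarrow> bool" where
  "cstar_dynamical_system J B \<omega> \<longleftrightarrow> cstar_subalgebra J B \<and>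
     (\<forall>t. star_automorphism J B (\<omega> t)) \<and>
     (\<forall>b\<in>B. \<omega> 0 b = b) \<and>
     (\<forall>s t. \<forall>b\<in>B. \<omega> (s + t) b = \<omega> s (\<omega> t b)) \<and>
     (\<forall>t. \<forall>b\<in>B. \<omega> (t + 1) b = \<omega> t b) \<and>
     (\<forall>b\<in>B. continuous_on UNIV (\<lambda>t. \<omega> t b))"

definition abelian_invariant :: "('h::{real_inner,complete_space} \<Rightarrow>\<^sub>L 'h) \<Rightarrow> ('h \<Rightarrow>\<^sub>L 'h) set
     \<Rightarrow> (real \<Rightarrow> ('h \<Rightarrow>\<^sub>L 'h) \<Rightarrow> ('h \<Rightarrow>\<^sub>L 'h)) \<Rightarrow> ('h \<Rightarrow>\<^sub>L 'h) set \<Rightarrow> bool" where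
  "abelian_invariant J B \<omega> A \<longleftrightarrow> star_subalgebra J A \<and> A \<subseteq> B \<and>
     (\<forall>x\<in>A. \<forall>y\<in>A. x o\<^sub>L y = y o\<^sub>L x) \<and> (\<forall>t. \<omega> t ` A \<subseteq> A)"

definition maximal_abelian_invariant :: "('h::{real_inner,complete_space} \<Rightarrow>\<^sub>L 'h) \<Rightarrow> ('h \<Rightarrow>\<^sub>L 'h) set
     \<Rightarrow> (real \<Rightarrow> ('h \<Rightarrow>\<^sub>L 'h) \<Rightarrow> ('h \<Rightarrow>\<^sub>L 'h)) \<Rightarrow> ('h \<Rightarrow>\<^sub>L 'h) set \<Rightarrow> bool" where
  "maximal_abelian_invariant J B \<omega> A \<longleftrightarrow> abelian_invariant J B \<omega> A \<and>
     (\<forall>C. abelian_invariant J B \<omega> C \<and> A \<subseteq> C \<longrightarrow> C = A)"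

definition commutant :: "('h::{real_inner,complete_space} \<Rightarrow>\<^sub>L 'h) \<Rightarrow> ('h \<Rightarrow>\<^sub>L 'h) set \<Rightarrow> ('h \<Rightarrow>\<^sub>L 'h) set" where
  "commutant J A = {T \<in> BH J. \<forall>a\<in>A. T o\<^sub>L a = a o\<^sub>L T}"

text \<open>\<pi>_0(b) = integral over T w.r.t. normalised Haar measure = integral over [0,1].\<close>
definition pi0 :: "(real \<Rightarrow> ('h::{real_inner,complete_space} \<Rightarrow>\<^sub>L 'h) \<Rightarrow> ('h \<Rightarrow>\<^sub>L 'h)) \<Rightarrow> ('h \<Rightarrow>\<^sub>L 'h) \<Rightarrow> ('h \<Rightarrow>\<^sub>L 'h)" where
  "pi0 \<omega> b = integral {0..1} (\<lambda>t. \<omega> t b)"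

end

theory Submission
  imports Defs "HOL-Library.Periodic_Fun"
begin

(* Let b in B commute with A and let c = pi0 b be the average of t \<mapsto> \<omega>_t b over the
   circle.  Then c lies in B (a closed subspace containing all Riemann sums), commutes with A
   (integration commutes with composition by a fixed operator) and is fixed by every \<omega>_s:
   each \<omega>_s is a contraction, so it commutes with the integral, and the integrand is
   1-periodic.  The real and imaginary parts of c are then self-adjoint \<omega>-fixed elements of
   A' \<inter> B, and such an element x lies in A by maximality, because the bicommutant of
   A \<union> {x} relative to B is an abelian \<omega>-invariant *-subalgebra containing A.

   Adjoints are obtained from the Riesz representation theorem, and *-homomorphisms are
   contractive by the usual spectral argument: if \<parallel>\<alpha> y\<parallel> > \<parallel>y\<parallel> for a self-adjoint y, then
   y\<^sup>2 / \<parallel>\<alpha> y\<parallel>\<^sup>2 has norm < 1 and hence a quasi-inverse given by a Neumann series, whereas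
   its image (\<alpha> y)\<^sup>2 / \<parallel>\<alpha> y\<parallel>\<^sup>2 has 1 as an approximate eigenvalue. *)

section \<open>Completeness of spaces of bounded operators\<close>

lemma Cauchy_blinfun_uniform_limit:
  fixes X :: "nat \<Rightarrow> 'a::real_normed_vector \<Rightarrow>\<^sub>L 'b::real_normed_vector"
  assumes Cauchy: "Cauchy X" and v: "\<And>x. (\<lambda>n. X n x) \<longlonglongrightarrow> v x" and "e > 0"
  obtains M where "\<And>n x. M \<le> n \<Longrightarrow> norm (X n x - v x) \<le> e * norm x"
proof -
  obtain M where M: "\<And>m n. M \<le> m \<Longrightarrow> M \<le> n \<Longrightarrow> norm (X m - X n) < e"
    using CauchyD[OF Cauchy \<open>e > 0\<close>] by blast
  have "norm (X n x - v x) \<le> e * norm x" if "M \<le> n" for n x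
  proof (rule tendsto_upperbound)
    show "(\<lambda>m. norm (X n x - X m x)) \<longlonglongrightarrow> norm (X n x - v x)"
      by (intro tendsto_intros v)
    show "\<forall>\<^sub>F m in sequentially. norm (X n x - X m x) \<le> e * norm x"
      using eventually_ge_at_top[of M]
    proof eventually_elim
      case (elim m)
      have "norm (X n x - X m x) \<le> norm (X n - X m) * norm x"
        by (metis blinfun.diff_left norm_blinfun)
      also have "\<dots> \<le> e * norm x"
        using M[OF \<open>M \<le> n\<close> elim] by (intro mult_right_mono) auto
      finally show ?case .
    qed
  qed simp
  with that show ?thesis
    by blast
qed

lemma Cauchy_blinfun_convergent:
  fixes X :: "nat \<Rightarrow> 'a::real_normed_vector \<Rightarrow>\<^sub>L 'b::{real_normed_vector,complete_space}"
  assumes Cauchy: "Cauchy X"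
  shows "convergent X"
proof -
  have "convergent (\<lambda>n. X n x)" for x
    using bounded_linear.Cauchy[OF blinfun.bounded_linear_left Cauchy] Cauchy_convergent by blast
  then obtain v where v: "\<And>x. (\<lambda>n. X n x) \<longlonglongrightarrow> v x"
    unfolding convergent_def by metis
  obtain M where M: "\<And>n x. M \<le> n \<Longrightarrow> norm (X n x - v x) \<le> 1 * norm x"
    using Cauchy_blinfun_uniform_limit[OF Cauchy v, of 1] by auto
  have "bounded_linear v"
  proof (rule bounded_linear_intro)
    show "v (x + y) = v x + v y" for x y
      using tendsto_add[OF v[of x] v[of y]] v[of "x + y"]
      by (simp add: blinfun.add_right LIMSEQ_unique)
    show "v (r *\<^sub>R x) = r *\<^sub>R v x" for r x
      using tendsto_scaleR[OF tendsto_const v[of x]] v[of "r *\<^sub>R x"]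
      by (simp add: blinfun.scaleR_right LIMSEQ_unique)
    show "norm (v x) \<le> norm x * (norm (X M) + 1)" for x
      using norm_triangle_ineq3[of "X M x" "v x"] M[OF order_refl, of x] norm_blinfun[of "X M" x]
      by (simp add: algebra_simps)
  qed
  have "X \<longlonglongrightarrow> Blinfun v"
  proof (rule LIMSEQ_I)
    fix r :: real assume "r > 0"
    then obtain M where M: "\<And>n x. M \<le> n \<Longrightarrow> norm (X n x - v x) \<le> r / 2 * norm x"
      using Cauchy_blinfun_uniform_limit[OF Cauchy v, of "r / 2"] by auto
    have "norm (X n - Blinfun v) < r" if "M \<le> n" for n
    proof -
      have "norm (X n - Blinfun v) \<le> r / 2"
        using \<open>r > 0\<close> M[OF that]
        by (intro norm_blinfun_bound)
          (simp_all add: blinfun.diff_left bounded_linear_Blinfun_apply[OF \<open>bounded_linear v\<close>])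
      with \<open>r > 0\<close> show ?thesis
        by linarith
    qed
    then show "\<exists>M. \<forall>n\<ge>M. norm (X n - Blinfun v) < r"
      by blast
  qed
  then show ?thesis
    by (rule convergentI)
qed

(* The library instance requires a codomain of sort banach, which does not include the
   sort {real_inner, complete_space} of the Hilbert space. *)
instance blinfun :: (real_normed_vector, "{real_normed_vector,complete_space}") banach
  by intro_classes (rule Cauchy_blinfun_convergent)

section \<open>The Riesz representation theorem\<close>

lemma linear_coeff_zero_if_quadratic_nonpos:
  fixes a b :: real
  assumes nonpos: "\<And>t. a * t + b * t\<^sup>2 \<le> 0"
  shows "a = 0"
proof (rule ccontr)
  assume "a \<noteq> 0"
  define c where "c = \<bar>b\<bar> + 1"
  have "c > 0" "c + b \<ge> 1"
    unfolding c_def by auto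
  have "a * (a / c) + b * (a / c)\<^sup>2 = a\<^sup>2 * (c + b) / c\<^sup>2"
    using \<open>c > 0\<close> by (simp add: field_simps power2_eq_square)
  also have "\<dots> > 0"
    using \<open>a \<noteq> 0\<close> \<open>c > 0\<close> \<open>c + b \<ge> 1\<close> by (intro divide_pos_pos mult_pos_pos) auto
  finally show False
    using nonpos[of "a / c"] by linarith
qed

lemma onorm_approx_unit:
  fixes f :: "'a::real_normed_vector \<Rightarrow> 'b::real_normed_vector"
  assumes f: "bounded_linear f" and "e > 0" and "onorm f > 0"
  obtains x where "norm x = 1" and "norm (f x) > onorm f - e"
proof -
  interpret f: bounded_linear f
    by (rule f)
  have "\<exists>x. norm x = 1 \<and> norm (f x) > onorm f - e"
  proof (rule ccontr)
    assume "\<not> ?thesis"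
    then have unit: "norm (f x) \<le> onorm f - e" if "norm x = 1" for x
      using that by force
    have "norm (f x) \<le> max 0 (onorm f - e) * norm x" for x
    proof (cases "x = 0")
      case True
      then show ?thesis
        using f.zero by simp
    next
      case False
      have "norm (f x) = norm x * norm (f (x /\<^sub>R norm x))"
        using False by (simp add: f.scaleR)
      also have "\<dots> \<le> norm x * max 0 (onorm f - e)"
        using unit[of "x /\<^sub>R norm x"] False by (intro mult_left_mono) auto
      finally show ?thesis
        by (simp add: mult.commute)
    qed
    then have "onorm f \<le> max 0 (onorm f - e)"
      by (intro onorm_bound) auto
    with assms show False
      by linarith
  qed
  with that show ?thesis
    by blast
qed

lemma almost_norming_unit_vector:
  fixes f :: "'a::real_normed_vector \<Rightarrow> real"
  assumes f: "bounded_linear f" and K: "onorm f > 0" and "d > 0"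
  obtains x where "norm x = 1" and "f x > onorm f * (1 - d)"
proof -
  interpret f: bounded_linear f
    by (rule f)
  obtain x where x: "norm x = 1" "\<bar>f x\<bar> > onorm f - onorm f * d"
    using onorm_approx_unit[OF f _ K, of "onorm f * d"] K \<open>d > 0\<close> by auto
  show ?thesis
  proof (cases "f x \<ge> 0")
    case True
    with x that show ?thesis
      by (auto simp: algebra_simps)
  next
    case False
    with x that[of "- x"] show ?thesis
      by (simp add: f.neg algebra_simps)
  qed
qed

lemma almost_norming_unit_vectors_close:
  fixes f :: "'a::real_inner \<Rightarrow> real"
  assumes f: "bounded_linear f" and K: "onorm f > 0"
    and x: "norm x = 1" "f x > onorm f * (1 - d)" and y: "norm y = 1" "f y > onorm f * (1 - d')"
    and "d + d' \<le> 2"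
  shows "(norm (x - y))\<^sup>2 \<le> 4 * (d + d')"
proof -
  interpret f: bounded_linear f
    by (rule f)
  have "onorm f * (2 - (d + d')) < f (x + y)"
    using x(2) y(2) by (simp add: f.add algebra_simps)
  also have "\<dots> \<le> onorm f * norm (x + y)"
    using onorm[OF f, of "x + y"] by simp
  finally have "2 - (d + d') \<le> norm (x + y)"
    using K by (simp add: mult_less_cancel_left_pos)
  then have "(2 - (d + d'))\<^sup>2 \<le> (norm (x + y))\<^sup>2"
    using \<open>d + d' \<le> 2\<close> by (intro power_mono) auto
  moreover have "(norm (x + y))\<^sup>2 + (norm (x - y))\<^sup>2 = 4"
    using x(1)[unfolded norm_eq_1] y(1)[unfolded norm_eq_1]
    by (simp add: power2_norm_eq_inner inner_add_left inner_add_right inner_diff_left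
        inner_diff_right inner_commute)
  moreover have "(2 - (d + d'))\<^sup>2 = 4 - 4 * (d + d') + (d + d')\<^sup>2"
    by (simp add: power2_eq_square algebra_simps)
  ultimately show ?thesis
    using zero_le_power2[of "d + d'"] by linarith
qed

lemma bounded_linear_functional_attains_onorm:
  fixes f :: "'a::{real_inner,complete_space} \<Rightarrow> real"
  assumes f: "bounded_linear f" and K: "onorm f > 0"
  obtains z where "norm z = 1" and "f z = onorm f"
proof -
  interpret f: bounded_linear f
    by (rule f)
  define \<delta> :: "nat \<Rightarrow> real" where "\<delta> n = inverse (real (Suc n))" for n
  have "\<delta> \<longlonglongrightarrow> 0"
    unfolding \<delta>_def by (rule LIMSEQ_inverse_real_of_nat)
  have \<delta>: "0 < \<delta> n" "\<delta> n \<le> 1" for n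
    unfolding \<delta>_def by (auto simp: field_simps)
  have "\<exists>x. norm x = 1 \<and> f x > onorm f * (1 - \<delta> n)" for n
    using almost_norming_unit_vector[OF f K \<delta>(1)] by blast
  then obtain x where x: "\<And>n. norm (x n) = 1" "\<And>n. f (x n) > onorm f * (1 - \<delta> n)"
    by metis
  have "Cauchy x"
  proof (rule CauchyI)
    fix e :: real assume "e > 0"
    then obtain M where M: "\<And>n. M \<le> n \<Longrightarrow> \<delta> n < e\<^sup>2 / 8"
      using order_tendstoD(2)[OF \<open>\<delta> \<longlonglongrightarrow> 0\<close>, of "e\<^sup>2 / 8"] by (auto simp: eventually_sequentially)
    have "norm (x m - x n) < e" if "M \<le> m" "M \<le> n" for m n
    proof -
      have "(norm (x m - x n))\<^sup>2 < e\<^sup>2"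
        using almost_norming_unit_vectors_close[OF f K x(1,2) x(1,2), of m n] \<delta>(2)[of m] \<delta>(2)[of n]
          M[OF that(1)] M[OF that(2)]
        by argo
      then show ?thesis
        using \<open>e > 0\<close> by (simp add: power_less_imp_less_base)
    qed
    then show "\<exists>M. \<forall>m\<ge>M. \<forall>n\<ge>M. norm (x m - x n) < e"
      by blast
  qed
  then obtain z where z: "x \<longlonglongrightarrow> z"
    unfolding Cauchy_convergent_iff convergent_def by blast
  have "norm z = 1"
    using tendsto_norm[OF z] x(1) by (simp add: LIMSEQ_const_iff)
  moreover have "f z = onorm f"
  proof (rule antisym)
    show "f z \<le> onorm f"
      using onorm[OF f, of z] \<open>norm z = 1\<close> by simp
    have "(\<lambda>n. onorm f * (1 - \<delta> n)) \<longlonglongrightarrow> onorm f * (1 - 0)"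
      by (intro tendsto_intros \<open>\<delta> \<longlonglongrightarrow> 0\<close>)
    then show "onorm f \<le> f z"
      using f.tendsto[OF z] x(2) by (simp add: LIMSEQ_le less_imp_le)
  qed
  ultimately show ?thesis
    using that by blast
qed

lemma bounded_linear_functional_eq_inner:
  fixes f :: "'a::real_inner \<Rightarrow> real"
  assumes f: "bounded_linear f" and "norm z = 1" and "f z = onorm f"
  shows "f y = inner (onorm f *\<^sub>R z) y"
proof -
  interpret f: bounded_linear f
    by (rule f)
  define K where "K = onorm f"
  have "K \<ge> 0"
    unfolding K_def by (rule onorm_pos_le[OF f])
  have "(2 * (K * f y - K\<^sup>2 * inner z y)) * t + ((f y)\<^sup>2 - K\<^sup>2 * (norm y)\<^sup>2) * t\<^sup>2 \<le> 0" for t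
  proof -
    have "(K + t * f y)\<^sup>2 = \<bar>f (z + t *\<^sub>R y)\<bar>\<^sup>2"
      using assms unfolding K_def by (simp add: f.add f.scaleR)
    also have "\<dots> \<le> (K * norm (z + t *\<^sub>R y))\<^sup>2"
      using onorm[OF f] unfolding K_def by (intro power_mono) auto
    also have "(norm (z + t *\<^sub>R y))\<^sup>2 = (norm z)\<^sup>2 + 2 * t * inner z y + t\<^sup>2 * (norm y)\<^sup>2"
      by (simp add: power2_norm_eq_inner inner_add_left inner_add_right inner_commute)
        (simp add: algebra_simps power2_eq_square)
    then have "(K * norm (z + t *\<^sub>R y))\<^sup>2 = K\<^sup>2 * (1 + 2 * t * inner z y + t\<^sup>2 * (norm y)\<^sup>2)"
      using \<open>norm z = 1\<close> by (simp add: power_mult_distrib)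
    finally show ?thesis
      by (simp add: algebra_simps power2_eq_square)
  qed
  then have "2 * (K * f y - K\<^sup>2 * inner z y) = 0"
    by (rule linear_coeff_zero_if_quadratic_nonpos)
  moreover have "f y = 0" if "K = 0"
    using that onorm_eq_0[OF f] unfolding K_def by simp
  ultimately show ?thesis
    using \<open>K \<ge> 0\<close> unfolding K_def[symmetric] by (cases "K = 0") (auto simp: power2_eq_square)
qed

lemma riesz_representation:
  fixes f :: "'a::{real_inner,complete_space} \<Rightarrow> real"
  assumes f: "bounded_linear f"
  obtains u where "\<And>x. f x = inner u x"
proof (cases "onorm f = 0")
  case True
  then show ?thesis
    using that[of 0] onorm_eq_0[OF f] by simp
next
  case False
  then have "onorm f > 0"
    using onorm_pos_le[OF f] by simp
  then obtain z where "norm z = 1" "f z = onorm f"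
    by (rule bounded_linear_functional_attains_onorm[OF f])
  then show ?thesis
    using that bounded_linear_functional_eq_inner[OF f] by blast
qed

section \<open>Adjoints\<close>

lemma adjoint_exists:
  fixes T :: "'a::{real_inner,complete_space} \<Rightarrow>\<^sub>L 'b::real_inner"
  obtains S :: "'b \<Rightarrow>\<^sub>L 'a" where "\<And>x y. inner (T x) y = inner x (S y)"
proof -
  have "\<exists>u. \<forall>x. inner (T x) y = inner x u" for y
  proof -
    have "bounded_linear (\<lambda>x. inner (T x) y)"
      by (intro bounded_linear_compose[OF bounded_linear_inner_left] blinfun.bounded_linear_right)
    then obtain u where "\<And>x. inner (T x) y = inner u x"
      using riesz_representation by blast
    then show ?thesis
      by (metis inner_commute)
  qed
  then obtain S where S: "\<And>x y. inner (T x) y = inner x (S y)"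
    by metis
  have "bounded_linear S"
  proof (rule bounded_linear_intro)
    show "S (y + y') = S y + S y'" for y y'
      using vector_eq_ldot[of "S (y + y')" "S y + S y'"]
      by (simp add: S[symmetric] inner_add_right)
    show "S (r *\<^sub>R y) = r *\<^sub>R S y" for r y
      using vector_eq_ldot[of "S (r *\<^sub>R y)" "r *\<^sub>R S y"]
      by (simp add: S[symmetric])
    show "norm (S y) \<le> norm y * norm T" for y
    proof -
      have "(norm (S y))\<^sup>2 = inner (T (S y)) y"
        by (simp add: S power2_norm_eq_inner)
      also have "\<dots> \<le> norm T * norm (S y) * norm y"
        using norm_cauchy_schwarz[of "T (S y)" y] norm_blinfun[of T "S y"]
        by (meson mult_right_mono norm_ge_zero order_trans)
      finally show ?thesis
        by (cases "S y = 0") (simp_all add: power2_eq_square algebra_simps)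
    qed
  qed
  then show ?thesis
    using that[of "Blinfun S"] S by (simp add: bounded_linear_Blinfun_apply)
qed

lemma adj_eqI:
  fixes T S :: "'h::{real_inner,complete_space} \<Rightarrow>\<^sub>L 'h"
  assumes "\<And>x y. inner (T x) y = inner x (S y)"
  shows "adj T = S"
  unfolding adj_def
proof (rule the_equality)
  fix S' :: "'h \<Rightarrow>\<^sub>L 'h"
  assume S': "\<forall>x y. inner (T x) y = inner x (S' y)"
  have "inner x (S' y) = inner x (S y)" for x y
    using S'[rule_format, of x y] assms[of x y] by linarith
  then show "S' = S"
    using vector_eq_ldot by (blast intro: blinfun_eqI)
qed (use assms in blast)

lemma adj_inner:
  fixes T :: "'h::{real_inner,complete_space} \<Rightarrow>\<^sub>L 'h"
  shows "inner (T x) y = inner x (adj T y)"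
proof -
  obtain S :: "'h \<Rightarrow>\<^sub>L 'h" where "\<And>x y. inner (T x) y = inner x (S y)"
    using adjoint_exists[of T] by blast
  moreover from this have "adj T = S"
    by (rule adj_eqI)
  ultimately show ?thesis
    by simp
qed

lemma adj_inner_left: "inner (adj T y) x = inner y (T x)"
  using adj_inner[of T x y] by (simp only: inner_commute)

lemma adj_adj: "adj (adj T) = T"
  by (rule adj_eqI) (simp add: adj_inner_left)

lemma adj_compose: "adj (S o\<^sub>L T) = adj T o\<^sub>L adj S"
  by (rule adj_eqI) (simp add: adj_inner[of S] adj_inner[of T])

lemma adj_add: "adj (S + T) = adj S + adj T"
  by (rule adj_eqI)
    (simp add: adj_inner[of S] adj_inner[of T] blinfun.add_left inner_add_left inner_add_right)

lemma adj_scaleR: "adj (r *\<^sub>R T) = r *\<^sub>R adj T"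
  by (rule adj_eqI) (simp add: adj_inner[of T] blinfun.scaleR_left)

lemma adj_diff: "adj (S - T) = adj S - adj T"
  by (rule adj_eqI)
    (simp add: adj_inner[of S] adj_inner[of T] blinfun.diff_left inner_diff_left inner_diff_right)

lemma norm_adj_le: "norm (adj T) \<le> norm T"
proof (rule norm_blinfun_bound)
  fix y
  have "(norm (adj T y))\<^sup>2 = inner (T (adj T y)) y"
    by (simp add: adj_inner power2_norm_eq_inner)
  also have "\<dots> \<le> norm T * norm (adj T y) * norm y"
    using norm_cauchy_schwarz[of "T (adj T y)" y] norm_blinfun[of T "adj T y"]
    by (meson mult_right_mono norm_ge_zero order_trans)
  finally show "norm (adj T y) \<le> norm T * norm y"
    by (cases "adj T y = 0") (simp_all add: power2_eq_square algebra_simps)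
qed simp

lemma norm_adj: "norm (adj T) = norm T"
  using norm_adj_le[of T] norm_adj_le[of "adj T"] by (simp add: adj_adj)

lemma norm_adj_compose_self: "norm (adj T o\<^sub>L T) = (norm T)\<^sup>2"
proof (rule antisym)
  show "norm (adj T o\<^sub>L T) \<le> (norm T)\<^sup>2"
    using norm_blinfun_compose[of "adj T" T] by (simp add: norm_adj power2_eq_square)
  have "norm T \<le> sqrt (norm (adj T o\<^sub>L T))"
  proof (rule norm_blinfun_bound)
    fix x
    have "(norm (T x))\<^sup>2 = inner x ((adj T o\<^sub>L T) x)"
      by (simp add: adj_inner[symmetric] power2_norm_eq_inner)
    also have "\<dots> \<le> norm x * norm ((adj T o\<^sub>L T) x)"
      by (rule norm_cauchy_schwarz)
    also have "\<dots> \<le> norm x * (norm (adj T o\<^sub>L T) * norm x)"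
      by (intro mult_left_mono norm_blinfun) simp
    also have "\<dots> = (sqrt (norm (adj T o\<^sub>L T)) * norm x)\<^sup>2"
      by (simp add: power_mult_distrib power2_eq_square)
    finally show "norm (T x) \<le> sqrt (norm (adj T o\<^sub>L T)) * norm x"
      by (rule power2_le_imp_le) simp
  qed simp
  then show "(norm T)\<^sup>2 \<le> norm (adj T o\<^sub>L T)"
    by (metis norm_ge_zero power_mono real_sqrt_pow2)
qed

section \<open>Complex scalars and star subalgebras\<close>

interpretation blinfun_compose: bounded_bilinear blinfun_compose
  by (rule bounded_bilinear_blinfun_compose)

lemma blinfun_compose_assoc: "(a o\<^sub>L b) o\<^sub>L c = a o\<^sub>L (b o\<^sub>L c)"
  by (rule blinfun_eqI) simp

lemma cscale_of_real [simp]: "cscale J (complex_of_real r) x = r *\<^sub>R x"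
  by (simp add: cscale_def)

lemma cscale_compose_left: "cscale J c x o\<^sub>L y = cscale J c (x o\<^sub>L y)"
  by (simp add: cscale_def blinfun_compose.add_left blinfun_compose.scaleR_left
      blinfun_compose_assoc)

lemma cscale_compose_right: "s \<in> BH J \<Longrightarrow> s o\<^sub>L cscale J c x = cscale J c (s o\<^sub>L x)"
  by (simp add: cscale_def BH_def blinfun_compose.add_right blinfun_compose.scaleR_right
      flip: blinfun_compose_assoc)

lemma complex_structure_twice: "complex_structure J \<Longrightarrow> J (J v) = - v"
  unfolding complex_structure_def
  by (metis blinfun_apply_blinfun_compose blinfun.minus_left id_blinfun.rep_eq id_apply)

lemma complex_structure_square: "complex_structure J \<Longrightarrow> J o\<^sub>L (J o\<^sub>L x) = - x"
  by (intro blinfun_eqI) (simp add: complex_structure_twice blinfun.minus_left)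

lemma complex_structure_adj:
  assumes "complex_structure J"
  shows "adj J = - J"
proof (rule adj_eqI)
  fix x y
  have "inner (J x) y = inner (J (J x)) (J y)"
    using assms unfolding complex_structure_def by simp
  then show "inner (J x) y = inner x ((- J) y)"
    by (simp add: complex_structure_twice[OF assms] blinfun.minus_left)
qed

lemma cscale_cscale: "complex_structure J \<Longrightarrow> cscale J c (cscale J d x) = cscale J (c * d) x"
  by (simp add: cscale_def complex_structure_square blinfun_compose.add_right
      blinfun_compose.scaleR_right algebra_simps)

lemma adj_cscale:
  assumes J: "complex_structure J" and "x \<in> BH J"
  shows "adj (cscale J c x) = cscale J (cnj c) (adj x)"
proof -
  have xJ: "x o\<^sub>L J = J o\<^sub>L x"
    using \<open>x \<in> BH J\<close> by (simp add: BH_def)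
  have "adj J o\<^sub>L adj x = adj x o\<^sub>L adj J"
    using arg_cong[where f = adj, OF xJ] by (simp only: adj_compose)
  then have "adj x o\<^sub>L adj J = - (J o\<^sub>L adj x)"
    by (simp add: complex_structure_adj[OF J] blinfun_compose.minus_left
        blinfun_compose.minus_right)
  moreover have "adj (cscale J c x) = Re c *\<^sub>R adj x + Im c *\<^sub>R (adj x o\<^sub>L adj J)"
    by (simp only: cscale_def adj_add adj_scaleR adj_compose)
  ultimately show ?thesis
    by (simp add: cscale_def)
qed

context
  fixes J :: "'h::{real_inner,complete_space} \<Rightarrow>\<^sub>L 'h" and B :: "('h \<Rightarrow>\<^sub>L 'h) set"
  assumes B: "star_subalgebra J B"
begin

lemma star_subalgebra_subset_BH: "B \<subseteq> BH J"
  using B unfolding star_subalgebra_def by blast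

lemma star_subalgebra_zero: "0 \<in> B"
  using B unfolding star_subalgebra_def by blast

lemma star_subalgebra_add: "x \<in> B \<Longrightarrow> y \<in> B \<Longrightarrow> x + y \<in> B"
  using B unfolding star_subalgebra_def by blast

lemma star_subalgebra_compose: "x \<in> B \<Longrightarrow> y \<in> B \<Longrightarrow> x o\<^sub>L y \<in> B"
  using B unfolding star_subalgebra_def by blast

lemma star_subalgebra_cscale: "x \<in> B \<Longrightarrow> cscale J c x \<in> B"
  using B unfolding star_subalgebra_def by blast

lemma star_subalgebra_adj: "x \<in> B \<Longrightarrow> adj x \<in> B"
  using B unfolding star_subalgebra_def by blast

lemma star_subalgebra_scaleR: "x \<in> B \<Longrightarrow> r *\<^sub>R x \<in> B"
  using star_subalgebra_cscale[of x "complex_of_real r"] by simp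

lemma star_subalgebra_diff: "x \<in> B \<Longrightarrow> y \<in> B \<Longrightarrow> x - y \<in> B"
  using star_subalgebra_add[OF _ star_subalgebra_scaleR[of y "-1"], of x] by simp

lemma star_subalgebra_subspace: "subspace B"
  unfolding subspace_def using star_subalgebra_zero star_subalgebra_add star_subalgebra_scaleR
  by blast

end

lemma star_subalgebra_Int:
  "star_subalgebra J A \<Longrightarrow> star_subalgebra J B \<Longrightarrow> star_subalgebra J (A \<inter> B)"
  unfolding star_subalgebra_def by blast

lemma star_subalgebra_subset_if_selfadjoint_subset:
  assumes J: "complex_structure J" and C: "star_subalgebra J C" and A: "star_subalgebra J A"
    and selfadjoint: "\<And>x. x \<in> C \<Longrightarrow> adj x = x \<Longrightarrow> x \<in> A"
  shows "C \<subseteq> A"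
proof
  fix c assume c: "c \<in> C"
  define h where "h = (1 / 2) *\<^sub>R (c + adj c)"
  define k where "k = cscale J (- \<i> / 2) (c - adj c)"
  have "c - adj c \<in> BH J"
    using c star_subalgebra_subset_BH[OF C] star_subalgebra_diff[OF C] star_subalgebra_adj[OF C]
    by blast
  have "h \<in> A"
  proof (rule selfadjoint)
    show "h \<in> C"
      unfolding h_def using c
      by (intro star_subalgebra_scaleR[OF C] star_subalgebra_add[OF C] star_subalgebra_adj[OF C])
    show "adj h = h"
      by (simp add: h_def adj_scaleR adj_add adj_adj add.commute)
  qed
  moreover have "k \<in> A"
  proof (rule selfadjoint)
    show "k \<in> C"
      unfolding k_def using c
      by (intro star_subalgebra_cscale[OF C] star_subalgebra_diff[OF C] star_subalgebra_adj[OF C])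
    have "adj k = cscale J (\<i> / 2) (adj c - c)"
      unfolding k_def adj_cscale[OF J \<open>c - adj c \<in> BH J\<close>] by (simp add: adj_diff adj_adj)
    also have "\<dots> = k"
      by (simp add: k_def cscale_def blinfun_compose.diff_right algebra_simps)
    finally show "adj k = k" .
  qed
  moreover have "c = h + cscale J \<i> k"
  proof -
    have "cscale J \<i> k = (1 / 2) *\<^sub>R (c - adj c)"
      unfolding k_def cscale_cscale[OF J] by (simp add: cscale_def)
    then have "h + cscale J \<i> k = (1 / 2) *\<^sub>R ((c + adj c) + (c - adj c))"
      by (simp only: h_def scaleR_add_right)
    then show ?thesis
      by simp
  qed
  ultimately show "c \<in> A"
    by (metis star_subalgebra_add[OF A] star_subalgebra_cscale[OF A])
qed

section \<open>Relative commutants\<close>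

lemma commutant_antimono: "S \<subseteq> T \<Longrightarrow> commutant J T \<subseteq> commutant J S"
  unfolding commutant_def by blast

lemma subset_bicommutant: "S \<subseteq> BH J \<Longrightarrow> S \<subseteq> commutant J (commutant J S \<inter> B)"
  unfolding commutant_def by auto

lemma star_subalgebra_commutant_Int:
  assumes B: "star_subalgebra J B" and S: "S \<subseteq> BH J" and S_adj: "adj ` S \<subseteq> S"
  shows "star_subalgebra J (commutant J S \<inter> B)"
proof -
  have B_BH: "B \<subseteq> BH J"
    by (rule star_subalgebra_subset_BH[OF B])
  show ?thesis
    unfolding star_subalgebra_def
  proof (intro conjI ballI allI)
    show "commutant J S \<inter> B \<subseteq> BH J"
      unfolding commutant_def by blast
    show "0 \<in> commutant J S \<inter> B"
      using B_BH star_subalgebra_zero[OF B] by (auto simp: commutant_def)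
    fix x y assume x: "x \<in> commutant J S \<inter> B" and y: "y \<in> commutant J S \<inter> B"
    show "x + y \<in> commutant J S \<inter> B"
      using x y B_BH star_subalgebra_add[OF B]
      by (auto simp: commutant_def blinfun_compose.add_left blinfun_compose.add_right)
    have "(x o\<^sub>L y) o\<^sub>L s = s o\<^sub>L (x o\<^sub>L y)" if "s \<in> S" for s
    proof -
      have "(x o\<^sub>L y) o\<^sub>L s = x o\<^sub>L (s o\<^sub>L y)"
        using y that by (simp add: commutant_def blinfun_compose_assoc)
      also have "\<dots> = s o\<^sub>L (x o\<^sub>L y)"
        using x that by (simp add: commutant_def flip: blinfun_compose_assoc)
      finally show ?thesis .
    qed
    then show "x o\<^sub>L y \<in> commutant J S \<inter> B"
      using x y B_BH star_subalgebra_compose[OF B] by (auto simp: commutant_def)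
  next
    fix c x assume x: "x \<in> commutant J S \<inter> B"
    have "cscale J c x o\<^sub>L s = s o\<^sub>L cscale J c x" if "s \<in> S" for s
      using x that S by (auto simp: commutant_def cscale_compose_left cscale_compose_right)
    with x show "cscale J c x \<in> commutant J S \<inter> B"
      using B_BH star_subalgebra_cscale[OF B] by (auto simp: commutant_def)
  next
    fix x assume x: "x \<in> commutant J S \<inter> B"
    have "adj x o\<^sub>L s = s o\<^sub>L adj x" if "s \<in> S" for s
    proof -
      have "x o\<^sub>L adj s = adj s o\<^sub>L x"
        using x S_adj that by (auto simp: commutant_def)
      then have "adj (adj s o\<^sub>L x) = adj (x o\<^sub>L adj s)"
        by simp
      then show ?thesis
        by (simp add: adj_compose adj_adj)
    qed
    with x show "adj x \<in> commutant J S \<inter> B"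
      using B_BH star_subalgebra_adj[OF B] by (auto simp: commutant_def)
  qed
qed

lemma bicommutant_Int_commute:
  assumes "S \<subseteq> commutant J S \<inter> B"
    and "x \<in> commutant J (commutant J S \<inter> B)"
    and "y \<in> commutant J (commutant J S \<inter> B) \<inter> B"
  shows "x o\<^sub>L y = y o\<^sub>L x"
proof -
  have "y \<in> commutant J S \<inter> B"
    using assms(3) commutant_antimono[OF assms(1)] by blast
  with assms(2) show ?thesis
    unfolding commutant_def by blast
qed

section \<open>Star homomorphisms are contractive\<close>

definition star_homomorphism :: "('h::{real_inner,complete_space} \<Rightarrow>\<^sub>L 'h) \<Rightarrow> ('h \<Rightarrow>\<^sub>L 'h) set
     \<Rightarrow> (('h \<Rightarrow>\<^sub>L 'h) \<Rightarrow> ('h \<Rightarrow>\<^sub>L 'h)) \<Rightarrow> bool" where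
  "star_homomorphism J B \<alpha> \<longleftrightarrow>
     (\<forall>x\<in>B. \<forall>y\<in>B. \<alpha> (x + y) = \<alpha> x + \<alpha> y \<and> \<alpha> (x o\<^sub>L y) = \<alpha> x o\<^sub>L \<alpha> y) \<and>
     (\<forall>c. \<forall>x\<in>B. \<alpha> (cscale J c x) = cscale J c (\<alpha> x)) \<and>
     (\<forall>x\<in>B. \<alpha> (adj x) = adj (\<alpha> x))"

lemma star_automorphism_iff:
  "star_automorphism J B \<alpha> \<longleftrightarrow> bij_betw \<alpha> B B \<and> star_homomorphism J B \<alpha>"
  unfolding star_automorphism_def star_homomorphism_def by blast

context
  fixes J :: "'h::{real_inner,complete_space} \<Rightarrow>\<^sub>L 'h" and B :: "('h \<Rightarrow>\<^sub>L 'h) set"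
    and \<alpha> :: "('h \<Rightarrow>\<^sub>L 'h) \<Rightarrow> ('h \<Rightarrow>\<^sub>L 'h)"
  assumes B: "star_subalgebra J B" and \<alpha>: "star_homomorphism J B \<alpha>"
begin

lemma star_homomorphism_add: "x \<in> B \<Longrightarrow> y \<in> B \<Longrightarrow> \<alpha> (x + y) = \<alpha> x + \<alpha> y"
  using \<alpha> unfolding star_homomorphism_def by blast

lemma star_homomorphism_compose: "x \<in> B \<Longrightarrow> y \<in> B \<Longrightarrow> \<alpha> (x o\<^sub>L y) = \<alpha> x o\<^sub>L \<alpha> y"
  using \<alpha> unfolding star_homomorphism_def by blast

lemma star_homomorphism_cscale: "x \<in> B \<Longrightarrow> \<alpha> (cscale J c x) = cscale J c (\<alpha> x)"
  using \<alpha> unfolding star_homomorphism_def by blast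

lemma star_homomorphism_adj: "x \<in> B \<Longrightarrow> \<alpha> (adj x) = adj (\<alpha> x)"
  using \<alpha> unfolding star_homomorphism_def by blast

lemma star_homomorphism_scaleR: "x \<in> B \<Longrightarrow> \<alpha> (r *\<^sub>R x) = r *\<^sub>R \<alpha> x"
  using star_homomorphism_cscale[of x "complex_of_real r"] by simp

lemma star_homomorphism_zero: "\<alpha> 0 = 0"
  using star_homomorphism_scaleR[OF star_subalgebra_zero[OF B], of 0] by simp

lemma star_homomorphism_diff: "x \<in> B \<Longrightarrow> y \<in> B \<Longrightarrow> \<alpha> (x - y) = \<alpha> x - \<alpha> y"
  using star_homomorphism_add[of "x - y" y] star_subalgebra_diff[OF B] by simp

end

lemma star_subalgebra_quasi_inverse:
  assumes B: "star_subalgebra J B" and "closed B" and a: "a \<in> B" and "norm a < 1"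
  obtains q where "q \<in> B" and "q = a + (q o\<^sub>L a)"
proof -
  define P where "P n = ((\<lambda>T. T o\<^sub>L a) ^^ n) a" for n
  have P_Suc: "P (Suc n) = P n o\<^sub>L a" for n
    unfolding P_def by simp
  have P_mem: "P n \<in> B" for n
    by (induction n) (simp_all add: P_def a star_subalgebra_compose[OF B])
  have norm_P: "norm (P n) \<le> norm a ^ Suc n" for n
  proof (induction n)
    case (Suc n)
    have "norm (P (Suc n)) \<le> norm (P n) * norm a"
      unfolding P_Suc by (rule norm_blinfun_compose)
    also have "\<dots> \<le> norm a ^ Suc n * norm a"
      using Suc.IH by (intro mult_right_mono) auto
    finally show ?case
      by (simp add: mult.commute)
  qed (simp add: P_def)
  have "summable (\<lambda>n. norm a ^ Suc n)"
    using \<open>norm a < 1\<close> by (simp add: summable_geometric)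
  then have "summable P"
    using norm_P by (rule summable_comparison_test')
  define q where "q = suminf P"
  have "q \<in> B"
  proof (rule closed_sequentially[OF \<open>closed B\<close>])
    show "(\<Sum>i<n. P i) \<in> B" for n
      by (rule subspace_sum[OF star_subalgebra_subspace[OF B] P_mem])
    show "(\<lambda>n. \<Sum>i<n. P i) \<longlonglongrightarrow> q"
      unfolding q_def by (rule summable_LIMSEQ[OF \<open>summable P\<close>])
  qed
  have "q o\<^sub>L a = (\<Sum>n. P n o\<^sub>L a)"
    unfolding q_def
    by (rule bounded_linear.suminf[OF blinfun_compose.bounded_linear_left \<open>summable P\<close>])
  also have "\<dots> = q - a"
    using suminf_split_head[OF \<open>summable P\<close>] by (simp add: q_def P_def)
  finally show ?thesis
    using that \<open>q \<in> B\<close> by simp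
qed

lemma norm_le_of_quasi_inverse:
  fixes Q A :: "'a::real_normed_vector \<Rightarrow>\<^sub>L 'a"
  assumes "Q = A + (Q o\<^sub>L A)"
  shows "norm v \<le> (1 + norm Q) * norm (v - A v)"
proof -
  have "Q (A v) = Q v - A v"
    using arg_cong[OF assms, of "\<lambda>T. blinfun_apply T v"] by (simp add: blinfun.add_left)
  then have "v = (v - A v) + Q (v - A v)"
    by (simp add: blinfun.diff_right)
  then have "norm v \<le> norm (v - A v) + norm (Q (v - A v))"
    by (metis norm_triangle_ineq)
  also have "\<dots> \<le> norm (v - A v) + norm Q * norm (v - A v)"
    using norm_blinfun[of Q "v - A v"] by simp
  finally show ?thesis
    by (simp add: algebra_simps)
qed

lemma selfadjoint_approx_eigenvector_square:
  fixes z :: "'h::{real_inner,complete_space} \<Rightarrow>\<^sub>L 'h"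
  assumes "adj z = z" and "z \<noteq> 0" and "e > 0"
  obtains v where "norm v = 1" and "norm (z (z v) - (norm z)\<^sup>2 *\<^sub>R v) < e"
proof -
  define s where "s = norm z"
  have "s > 0"
    using \<open>z \<noteq> 0\<close> unfolding s_def by simp
  define d where "d = e\<^sup>2 / (4 * s ^ 3)"
  have "d > 0"
    unfolding d_def using \<open>s > 0\<close> \<open>e > 0\<close> by simp
  obtain v where v: "norm v = 1" and "norm (z v) > s - d"
    using onorm_approx_unit[OF blinfun.bounded_linear_right \<open>d > 0\<close>] \<open>s > 0\<close>
    unfolding s_def norm_blinfun.rep_eq by blast
  define n where "n = norm (z v)"
  have n: "s - d < n" "n \<le> s"
    using \<open>norm (z v) > s - d\<close> norm_blinfun[of z v] v unfolding n_def s_def by auto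
  have "inner v (z (z v)) = n\<^sup>2"
    using adj_inner[of z v "z v"] \<open>adj z = z\<close> unfolding n_def by (simp add: power2_norm_eq_inner)
  then have "(norm (z (z v) - s\<^sup>2 *\<^sub>R v))\<^sup>2 = (norm (z (z v)))\<^sup>2 - 2 * (s * n)\<^sup>2 + s\<^sup>2 * s\<^sup>2"
    using v[unfolded norm_eq_1]
    by (simp add: power2_norm_eq_inner inner_diff_left inner_diff_right inner_commute)
      (simp add: power2_eq_square algebra_simps)
  also have "\<dots> \<le> (s * n)\<^sup>2 - 2 * (s * n)\<^sup>2 + s\<^sup>2 * s\<^sup>2"
    using norm_blinfun[of z "z v"] norm_ge_zero[of "z (z v)"] unfolding s_def n_def
    by (simp add: power_mono)
  also have "\<dots> = s\<^sup>2 * ((s - n) * (s + n))"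
    by (simp add: power2_eq_square algebra_simps)
  also have "\<dots> \<le> s\<^sup>2 * (d * (2 * s))"
    using n \<open>s > 0\<close> norm_ge_zero[of "z v"] unfolding n_def
    by (intro mult_left_mono mult_mono) auto
  also have "\<dots> < e\<^sup>2"
    using \<open>s > 0\<close> \<open>e > 0\<close> unfolding d_def by (simp add: power2_eq_square power3_eq_cube)
  finally have "norm (z (z v) - s\<^sup>2 *\<^sub>R v) < e"
    using \<open>e > 0\<close> by (simp add: power_less_imp_less_base)
  then show ?thesis
    using that v unfolding s_def by blast
qed

lemma normalized_square_not_quasi_invertible:
  fixes z :: "'h::{real_inner,complete_space} \<Rightarrow>\<^sub>L 'h"
  assumes "adj z = z" and "z \<noteq> 0"
  defines "A \<equiv> (1 / (norm z)\<^sup>2) *\<^sub>R (z o\<^sub>L z)"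
  shows "Q \<noteq> A + (Q o\<^sub>L A)"
proof
  assume Q: "Q = A + (Q o\<^sub>L A)"
  define s where "s = norm z"
  define C where "C = 1 + norm Q"
  have "s > 0" "C > 0"
    using \<open>z \<noteq> 0\<close> unfolding s_def C_def by (simp_all add: add_pos_nonneg)
  obtain v where "norm v = 1" and v: "norm (z (z v) - s\<^sup>2 *\<^sub>R v) < s\<^sup>2 / C"
    using selfadjoint_approx_eigenvector_square[OF assms(1,2), of "s\<^sup>2 / C"] \<open>s > 0\<close> \<open>C > 0\<close>
    unfolding s_def by force
  have "1 \<le> C * norm (v - A v)"
    using norm_le_of_quasi_inverse[OF Q, of v] \<open>norm v = 1\<close> unfolding C_def by simp
  also have "v - A v = (1 / s\<^sup>2) *\<^sub>R (s\<^sup>2 *\<^sub>R v - z (z v))"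
    using \<open>s > 0\<close> by (simp add: A_def s_def blinfun.scaleR_left algebra_simps)
  also have "C * norm \<dots> = C * norm (z (z v) - s\<^sup>2 *\<^sub>R v) / s\<^sup>2"
    by (simp only: norm_scaleR norm_minus_commute[of "s\<^sup>2 *\<^sub>R v"]) simp
  also have "\<dots> < 1"
    using v \<open>s > 0\<close> \<open>C > 0\<close> by (simp add: field_simps)
  finally show False
    by simp
qed

lemma star_homomorphism_norm_le_selfadjoint:
  assumes B: "star_subalgebra J B" "closed B" and \<alpha>: "star_homomorphism J B \<alpha>"
    and y: "y \<in> B" "adj y = y"
  shows "norm (\<alpha> y) \<le> norm y"
proof (rule ccontr)
  assume "\<not> norm (\<alpha> y) \<le> norm y"
  then have "norm y < norm (\<alpha> y)" "norm (\<alpha> y) > 0" "\<alpha> y \<noteq> 0"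
    using norm_ge_zero[of y] by auto
  define a where "a = (1 / (norm (\<alpha> y))\<^sup>2) *\<^sub>R (y o\<^sub>L y)"
  have "a \<in> B"
    unfolding a_def using y(1)
    by (intro star_subalgebra_scaleR[OF B(1)] star_subalgebra_compose[OF B(1)])
  have "norm a \<le> (norm y)\<^sup>2 / (norm (\<alpha> y))\<^sup>2"
    using norm_blinfun_compose[of y y] unfolding a_def
    by (simp add: power2_eq_square divide_right_mono)
  also have "\<dots> < 1"
    using \<open>norm y < norm (\<alpha> y)\<close> \<open>norm (\<alpha> y) > 0\<close> by (simp add: power_strict_mono)
  finally obtain q where "q \<in> B" and q: "q = a + (q o\<^sub>L a)"
    using star_subalgebra_quasi_inverse[OF B \<open>a \<in> B\<close>] by blast
  have "\<alpha> q = \<alpha> a + (\<alpha> q o\<^sub>L \<alpha> a)"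
    using arg_cong[OF q, of \<alpha>] \<open>q \<in> B\<close> \<open>a \<in> B\<close>
    by (simp add: star_homomorphism_add[OF B(1) \<alpha>] star_homomorphism_compose[OF B(1) \<alpha>]
        star_subalgebra_compose[OF B(1)])
  moreover have "\<alpha> a = (1 / (norm (\<alpha> y))\<^sup>2) *\<^sub>R (\<alpha> y o\<^sub>L \<alpha> y)"
    unfolding a_def
    using star_homomorphism_scaleR[OF B(1) \<alpha> star_subalgebra_compose[OF B(1) y(1) y(1)]]
      star_homomorphism_compose[OF B(1) \<alpha> y(1) y(1)] by simp
  moreover have "adj (\<alpha> y) = \<alpha> y"
    using star_homomorphism_adj[OF B(1) \<alpha> y(1)] y(2) by simp
  ultimately show False
    using normalized_square_not_quasi_invertible[OF _ \<open>\<alpha> y \<noteq> 0\<close>] by simp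
qed

lemma star_homomorphism_norm_le:
  assumes B: "star_subalgebra J B" "closed B" and \<alpha>: "star_homomorphism J B \<alpha>" and x: "x \<in> B"
  shows "norm (\<alpha> x) \<le> norm x"
proof -
  have "adj x o\<^sub>L x \<in> B"
    using x by (intro star_subalgebra_compose[OF B(1)] star_subalgebra_adj[OF B(1)])
  have "(norm (\<alpha> x))\<^sup>2 = norm (\<alpha> (adj x o\<^sub>L x))"
    using x star_subalgebra_adj[OF B(1) x]
    by (simp add: star_homomorphism_compose[OF B(1) \<alpha>] star_homomorphism_adj[OF B(1) \<alpha>]
        norm_adj_compose_self)
  also have "\<dots> \<le> norm (adj x o\<^sub>L x)"
    using \<open>adj x o\<^sub>L x \<in> B\<close>
    by (rule star_homomorphism_norm_le_selfadjoint[OF B \<alpha>]) (simp add: adj_compose adj_adj)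
  also have "\<dots> = (norm x)\<^sup>2"
    by (rule norm_adj_compose_self)
  finally show ?thesis
    by (rule power2_le_imp_le) simp
qed

section \<open>Integrals in closed subspaces\<close>

definition riemann_sum :: "(real \<Rightarrow> 'a::real_normed_vector) \<Rightarrow> (real \<times> real set) set \<Rightarrow> 'a" where
  "riemann_sum f D = (\<Sum>(x, k)\<in>D. Henstock_Kurzweil_Integration.content k *\<^sub>R f x)"

lemma tagged_division_approximating:
  fixes f :: "real \<Rightarrow> 'a::real_normed_vector" and g :: "real \<Rightarrow> 'b::real_normed_vector"
  assumes f: "(f has_integral I) {a..b}" and g: "(g has_integral I') {a..b}" and "e > 0"
  obtains D where "D tagged_division_of {a..b}"
    and "norm (riemann_sum f D - I) < e" and "norm (riemann_sum g D - I') < e"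
proof -
  obtain \<gamma>f where "gauge \<gamma>f" and \<gamma>f: "\<And>D. D tagged_division_of {a..b} \<Longrightarrow> \<gamma>f fine D \<Longrightarrow>
      norm (riemann_sum f D - I) < e"
    using f \<open>e > 0\<close> unfolding has_integral_real riemann_sum_def by meson
  obtain \<gamma>g where "gauge \<gamma>g" and \<gamma>g: "\<And>D. D tagged_division_of {a..b} \<Longrightarrow> \<gamma>g fine D \<Longrightarrow>
      norm (riemann_sum g D - I') < e"
    using g \<open>e > 0\<close> unfolding has_integral_real riemann_sum_def by meson
  obtain D where "D tagged_division_of {a..b}" and "(\<lambda>x. \<gamma>f x \<inter> \<gamma>g x) fine D"
    using fine_division_exists_real[OF gauge_Int[OF \<open>gauge \<gamma>f\<close> \<open>gauge \<gamma>g\<close>]] by blast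
  with \<gamma>f \<gamma>g that show ?thesis
    by (simp add: fine_Int)
qed

lemma riemann_sum_in_subspace:
  fixes f :: "real \<Rightarrow> 'a::real_normed_vector"
  assumes D: "D tagged_division_of {a..b}" and f: "\<forall>t\<in>{a..b}. f t \<in> S" and S: "subspace S"
  shows "riemann_sum f D \<in> S"
  unfolding riemann_sum_def
proof (rule subspace_sum[OF S])
  fix p assume "p \<in> D"
  then obtain x k where "p = (x, k)" "x \<in> {a..b}"
    using tagged_division_ofD(2,3)[OF D] by (cases p) blast
  then show "(case p of (x, k) \<Rightarrow> Henstock_Kurzweil_Integration.content k *\<^sub>R f x) \<in> S"
    using f subspace_scale[OF S] by simp
qed

lemma has_integral_in_closed_subspace:
  fixes f :: "real \<Rightarrow> 'a::real_normed_vector"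
  assumes f: "(f has_integral I) {a..b}" and "\<forall>t\<in>{a..b}. f t \<in> S"
    and "subspace S" and "closed S"
  shows "I \<in> S"
proof (rule closed_approachable[OF \<open>closed S\<close>, THEN iffD1], intro allI impI)
  fix e :: real assume "e > 0"
  then obtain D where "D tagged_division_of {a..b}" and "norm (riemann_sum f D - I) < e"
    using tagged_division_approximating[OF f f] by metis
  then show "\<exists>y\<in>S. dist y I < e"
    using riemann_sum_in_subspace assms(2,3) by (metis dist_norm)
qed

lemma additive_map_sum:
  assumes "subspace S" and "finite A" and "\<forall>i\<in>A. h i \<in> S" and "L 0 = 0"
    and add: "\<And>x y. x \<in> S \<Longrightarrow> y \<in> S \<Longrightarrow> L (x + y) = L x + L y"
  shows "L (sum h A) = (\<Sum>i\<in>A. L (h i))"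
  using assms(2,3)
proof (induction A rule: finite_induct)
  case (insert i A)
  then show ?case
    using add subspace_sum[OF \<open>subspace S\<close>, of A h] by simp
qed (simp add: \<open>L 0 = 0\<close>)

lemma riemann_sum_map_on_subspace:
  fixes f :: "real \<Rightarrow> 'a::real_normed_vector"
  assumes D: "D tagged_division_of {a..b}" and fS: "\<forall>t\<in>{a..b}. f t \<in> S" and S: "subspace S"
    and add: "\<And>x y. x \<in> S \<Longrightarrow> y \<in> S \<Longrightarrow> L (x + y) = L x + L y"
    and scale: "\<And>r x. x \<in> S \<Longrightarrow> L (r *\<^sub>R x) = r *\<^sub>R L x"
  shows "L (riemann_sum f D) = riemann_sum (\<lambda>t. L (f t)) D"
proof -
  have tags: "x \<in> {a..b}" if "(x, k) \<in> D" for x k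
    using tagged_division_ofD(2,3)[OF D that] by blast
  have "L 0 = 0"
    using scale[of 0 0] subspace_0[OF S] by simp
  moreover have "\<forall>p\<in>D. (case p of (x, k) \<Rightarrow> Henstock_Kurzweil_Integration.content k *\<^sub>R f x) \<in> S"
    using tags fS subspace_scale[OF S] by fastforce
  ultimately have "L (riemann_sum f D)
      = (\<Sum>p\<in>D. L (case p of (x, k) \<Rightarrow> Henstock_Kurzweil_Integration.content k *\<^sub>R f x))"
    unfolding riemann_sum_def using additive_map_sum[OF S _ _ _ add] D by blast
  also have "\<dots> = riemann_sum (\<lambda>t. L (f t)) D"
    unfolding riemann_sum_def using tags fS scale by (intro sum.cong) auto
  finally show ?thesis .
qed

(* The map L is only known to be linear and contractive on S, so the library's
   integral_linear does not apply. *)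
lemma has_integral_contraction_on_subspace:
  fixes f :: "real \<Rightarrow> 'a::real_normed_vector"
  assumes f: "(f has_integral I) {a..b}" and Lf: "((\<lambda>t. L (f t)) has_integral I') {a..b}"
    and fS: "\<forall>t\<in>{a..b}. f t \<in> S" and S: "subspace S" "closed S"
    and add: "\<And>x y. x \<in> S \<Longrightarrow> y \<in> S \<Longrightarrow> L (x + y) = L x + L y"
    and scale: "\<And>r x. x \<in> S \<Longrightarrow> L (r *\<^sub>R x) = r *\<^sub>R L x"
    and contraction: "\<And>x y. x \<in> S \<Longrightarrow> y \<in> S \<Longrightarrow> norm (L x - L y) \<le> norm (x - y)"
  shows "I' = L I"
proof -
  have "I \<in> S"
    using has_integral_in_closed_subspace[OF f fS S] .
  have approx: "norm (I' - L I) \<le> 2 * e" if "e > 0" for e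
  proof -
    obtain D where D: "D tagged_division_of {a..b}"
      and close_f: "norm (riemann_sum f D - I) < e"
      and close_Lf: "norm (riemann_sum (\<lambda>t. L (f t)) D - I') < e"
      using tagged_division_approximating[OF f Lf \<open>e > 0\<close>] by blast
    have "riemann_sum f D \<in> S"
      by (rule riemann_sum_in_subspace[OF D fS S(1)])
    have "norm (I' - L I)
        \<le> norm (riemann_sum (\<lambda>t. L (f t)) D - I') + norm (L (riemann_sum f D) - L I)"
      using riemann_sum_map_on_subspace[OF D fS S(1) add scale]
      by (metis norm_diff_triangle_le norm_minus_commute order_refl)
    also have "\<dots> \<le> e + norm (riemann_sum f D - I)"
      using close_Lf contraction[OF \<open>riemann_sum f D \<in> S\<close> \<open>I \<in> S\<close>] by simp
    also have "\<dots> \<le> 2 * e"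
      using close_f by simp
    finally show ?thesis .
  qed
  have "norm (I' - L I) \<le> 0"
  proof (rule field_le_epsilon)
    fix e :: real assume "e > 0"
    then show "norm (I' - L I) \<le> 0 + e"
      using approx[of "e / 2"] by simp
  qed
  then show ?thesis
    by simp
qed

lemma integral_periodic_shift:
  fixes F :: "real \<Rightarrow> 'a::banach"
  assumes F: "continuous_on UNIV F" and periodic: "\<And>t. F (t + 1) = F t"
  shows "integral {0..1} (\<lambda>t. F (s + t)) = integral {0..1} F"
proof -
  interpret periodic_fun_simple' F
    by standard (rule periodic)
  have integrable: "F integrable_on {a..b}" for a b
    by (rule integrable_continuous_real) (rule continuous_on_subset[OF F], simp)
  have shift_unit: "integral {0..1} (\<lambda>t. F (r + t)) = integral {0..1} F" if "0 \<le> r" "r \<le> 1" for r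
  proof -
    have "integral {0..1} (\<lambda>t. F (r + t)) = integral {r..1 + r} F"
      using integral_shift_Icc_real[of 0 1 F r] by (simp add: o_def add.commute)
    also have "\<dots> = integral {r..1} F + integral {1..1 + r} F"
      using Henstock_Kurzweil_Integration.integral_combine[where a = r and c = 1 and b = "1 + r" and f = F]
        integrable that by (simp add: add.commute)
    also have "integral {1..1 + r} F = integral {0..r} F"
      using integral_shift_Icc_real[of 0 r F 1] plus_1 by (simp add: o_def add.commute)
    also have "integral {r..1} F + integral {0..r} F = integral {0..1} F"
      using Henstock_Kurzweil_Integration.integral_combine[where a = 0 and c = r and b = 1 and f = F]
        integrable that by (simp add: add.commute)
    finally show ?thesis .
  qed
  have "F (s + t) = F (frac s + t)" for t
    using plus_of_int[of "frac s + t" "\<lfloor>s\<rfloor>"] by (simp add: frac_def algebra_simps)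
  then show ?thesis
    using shift_unit[of "frac s"] frac_ge_0[of s] frac_lt_1[of s] by simp
qed

section \<open>The averaging map of a circle action\<close>

definition fixed_points :: "(real \<Rightarrow> 'a \<Rightarrow> 'a) \<Rightarrow> 'a set \<Rightarrow> 'a set" where
  "fixed_points \<omega> B = {b \<in> B. \<forall>t. \<omega> t b = b}"

locale cstar_dynamics =
  fixes J :: "'h::{real_inner,complete_space} \<Rightarrow>\<^sub>L 'h" and B :: "('h \<Rightarrow>\<^sub>L 'h) set"
    and \<omega> :: "real \<Rightarrow> ('h \<Rightarrow>\<^sub>L 'h) \<Rightarrow> ('h \<Rightarrow>\<^sub>L 'h)"
  assumes cstar_dynamical_system: "cstar_dynamical_system J B \<omega>"
begin

lemma B_subalgebra: "star_subalgebra J B" and B_closed: "closed B"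
  using cstar_dynamical_system unfolding cstar_dynamical_system_def cstar_subalgebra_def by blast+

lemma act_homomorphism: "star_homomorphism J B (\<omega> t)"
  using cstar_dynamical_system unfolding cstar_dynamical_system_def star_automorphism_iff by blast

lemma act_mem: "b \<in> B \<Longrightarrow> \<omega> t b \<in> B"
  using cstar_dynamical_system unfolding cstar_dynamical_system_def star_automorphism_def
  by (meson bij_betwE)

lemma act_0: "b \<in> B \<Longrightarrow> \<omega> 0 b = b"
  and act_add: "b \<in> B \<Longrightarrow> \<omega> (s + t) b = \<omega> s (\<omega> t b)"
  and act_periodic: "b \<in> B \<Longrightarrow> \<omega> (t + 1) b = \<omega> t b"
  and act_continuous: "b \<in> B \<Longrightarrow> continuous_on UNIV (\<lambda>t. \<omega> t b)"
  using cstar_dynamical_system unfolding cstar_dynamical_system_def by blast+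

lemma act_inverse: "b \<in> B \<Longrightarrow> \<omega> t (\<omega> (- t) b) = b"
  using act_add[of b t "- t"] act_0[of b] by simp

lemma norm_act_le: "b \<in> B \<Longrightarrow> norm (\<omega> t b) \<le> norm b"
  by (rule star_homomorphism_norm_le[OF B_subalgebra B_closed act_homomorphism])

lemma star_subalgebra_fixed_points: "star_subalgebra J (fixed_points \<omega> B)"
  using star_subalgebra_subset_BH[OF B_subalgebra] star_subalgebra_zero[OF B_subalgebra]
    star_subalgebra_add[OF B_subalgebra] star_subalgebra_compose[OF B_subalgebra]
    star_subalgebra_cscale[OF B_subalgebra] star_subalgebra_adj[OF B_subalgebra]
    star_homomorphism_zero[OF B_subalgebra act_homomorphism]
    star_homomorphism_add[OF B_subalgebra act_homomorphism]
    star_homomorphism_compose[OF B_subalgebra act_homomorphism]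
    star_homomorphism_cscale[OF B_subalgebra act_homomorphism]
    star_homomorphism_adj[OF B_subalgebra act_homomorphism]
  unfolding star_subalgebra_def fixed_points_def by auto

lemma commutant_Int_invariant:
  assumes "S \<subseteq> B" and "\<And>t. \<omega> t ` S \<subseteq> S" and b: "b \<in> commutant J S \<inter> B"
  shows "\<omega> t b \<in> commutant J S \<inter> B"
proof -
  have "\<omega> t b o\<^sub>L a = a o\<^sub>L \<omega> t b" if "a \<in> S" for a
  proof -
    define a' where "a' = \<omega> (- t) a"
    have "a' \<in> S" "a' \<in> B" "\<omega> t a' = a"
      unfolding a'_def using assms(1,2) \<open>a \<in> S\<close> act_inverse by blast+
    moreover have "b o\<^sub>L a' = a' o\<^sub>L b"
      using b \<open>a' \<in> S\<close> unfolding commutant_def by blast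
    ultimately show ?thesis
      using b star_homomorphism_compose[OF B_subalgebra act_homomorphism, of b a' t]
        star_homomorphism_compose[OF B_subalgebra act_homomorphism, of a' b t] by simp
  qed
  then show ?thesis
    using b act_mem star_subalgebra_subset_BH[OF B_subalgebra] unfolding commutant_def by blast
qed

lemma maximal_abelian_invariant_selfadjoint_mem:
  assumes max: "maximal_abelian_invariant J B \<omega> A"
    and x: "x \<in> commutant J A \<inter> fixed_points \<omega> B" and "adj x = x"
  shows "x \<in> A"
proof -
  have A: "star_subalgebra J A" "A \<subseteq> B" "\<And>a a'. a \<in> A \<Longrightarrow> a' \<in> A \<Longrightarrow> a o\<^sub>L a' = a' o\<^sub>L a"
    "\<And>t. \<omega> t ` A \<subseteq> A"
    using max unfolding maximal_abelian_invariant_def abelian_invariant_def by blast+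
  have "x \<in> B" "\<And>t. \<omega> t x = x"
    using x unfolding fixed_points_def by blast+
  define S where "S = insert x A"
  have S_B: "S \<subseteq> B"
    unfolding S_def using A(2) \<open>x \<in> B\<close> by blast
  have S_BH: "S \<subseteq> BH J"
    using S_B star_subalgebra_subset_BH[OF B_subalgebra] by blast
  have S_adj: "adj ` S \<subseteq> S"
    unfolding S_def using \<open>adj x = x\<close> star_subalgebra_adj[OF A(1)] by auto
  have S_commutative: "S \<subseteq> commutant J S \<inter> B"
    using S_B S_BH x A(3) unfolding S_def commutant_def by auto
  have S_invariant: "\<omega> t ` S \<subseteq> S" for t
    unfolding S_def using \<open>\<omega> t x = x\<close> A(4) by auto
  have Sc: "star_subalgebra J (commutant J S \<inter> B)"
    by (rule star_subalgebra_commutant_Int[OF B_subalgebra S_BH S_adj])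
  have Sc_invariant: "\<omega> t ` (commutant J S \<inter> B) \<subseteq> commutant J S \<inter> B" for t
    using commutant_Int_invariant[OF S_B S_invariant] by blast
  define C where "C = commutant J (commutant J S \<inter> B) \<inter> B"
  have "star_subalgebra J C"
    unfolding C_def using star_subalgebra_subset_BH[OF Sc] star_subalgebra_adj[OF Sc]
    by (intro star_subalgebra_commutant_Int[OF B_subalgebra]) auto
  moreover have "C \<subseteq> B"
    unfolding C_def by (rule Int_lower2)
  moreover have "a o\<^sub>L a' = a' o\<^sub>L a" if "a \<in> C" "a' \<in> C" for a a'
    by (rule bicommutant_Int_commute[OF S_commutative]) (use that in \<open>simp_all add: C_def\<close>)
  moreover have "\<omega> t ` C \<subseteq> C" for t
    unfolding C_def using commutant_Int_invariant[OF Int_lower2 Sc_invariant] by blast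
  ultimately have "abelian_invariant J B \<omega> C"
    unfolding abelian_invariant_def by blast
  moreover have "S \<subseteq> C"
    unfolding C_def using subset_bicommutant[OF S_BH] S_B by blast
  ultimately show "x \<in> A"
    using max unfolding maximal_abelian_invariant_def S_def by blast
qed

lemma pi0_has_integral: "b \<in> B \<Longrightarrow> ((\<lambda>t. \<omega> t b) has_integral pi0 \<omega> b) {0..1}"
  unfolding pi0_def
  by (intro integrable_integral integrable_continuous_real continuous_on_subset[OF act_continuous])
    auto

lemma pi0_mem: "b \<in> B \<Longrightarrow> pi0 \<omega> b \<in> B"
  using act_mem
  by (intro has_integral_in_closed_subspace[OF pi0_has_integral _
        star_subalgebra_subspace[OF B_subalgebra] B_closed]) auto

lemma pi0_fixed: "b \<in> B \<Longrightarrow> pi0 \<omega> b \<in> fixed_points \<omega> B"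
proof -
  assume "b \<in> B"
  have "\<omega> s (pi0 \<omega> b) = pi0 \<omega> b" for s
  proof (rule sym, rule has_integral_contraction_on_subspace[OF pi0_has_integral[OF \<open>b \<in> B\<close>]])
    have "continuous_on UNIV (\<lambda>t. \<omega> (s + t) b)"
      by (rule continuous_on_compose2[OF act_continuous[OF \<open>b \<in> B\<close>]])
        (auto intro!: continuous_intros)
    then have "((\<lambda>t. \<omega> (s + t) b) has_integral integral {0..1} (\<lambda>t. \<omega> (s + t) b)) {0..1}"
      by (intro integrable_integral integrable_continuous_real) (rule continuous_on_subset, auto)
    moreover have "integral {0..1} (\<lambda>t. \<omega> (s + t) b) = pi0 \<omega> b"
      unfolding pi0_def using act_continuous act_periodic \<open>b \<in> B\<close>
      by (intro integral_periodic_shift) auto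
    ultimately show "((\<lambda>t. \<omega> s (\<omega> t b)) has_integral pi0 \<omega> b) {0..1}"
      using act_add[OF \<open>b \<in> B\<close>] by simp
    show "\<forall>t\<in>{0..1}. \<omega> t b \<in> B"
      using act_mem \<open>b \<in> B\<close> by blast
    show "subspace B" "closed B"
      by (rule star_subalgebra_subspace[OF B_subalgebra], rule B_closed)
    show "\<omega> s (x + y) = \<omega> s x + \<omega> s y" if "x \<in> B" "y \<in> B" for x y
      using that by (rule star_homomorphism_add[OF B_subalgebra act_homomorphism])
    show "\<omega> s (r *\<^sub>R x) = r *\<^sub>R \<omega> s x" if "x \<in> B" for r x
      using that by (rule star_homomorphism_scaleR[OF B_subalgebra act_homomorphism])
    show "norm (\<omega> s x - \<omega> s y) \<le> norm (x - y)" if "x \<in> B" "y \<in> B" for x y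
      using that norm_act_le[of "x - y" s] star_subalgebra_diff[OF B_subalgebra]
      by (simp add: star_homomorphism_diff[OF B_subalgebra act_homomorphism])
  qed
  then show ?thesis
    using pi0_mem[OF \<open>b \<in> B\<close>] unfolding fixed_points_def by blast
qed

lemma pi0_commutant:
  assumes "b \<in> B" and "\<And>t. \<omega> t b \<in> commutant J S"
  shows "pi0 \<omega> b \<in> commutant J S"
proof -
  have "pi0 \<omega> b o\<^sub>L a = a o\<^sub>L pi0 \<omega> b" if "a \<in> S" for a
  proof -
    have "((\<lambda>t. \<omega> t b o\<^sub>L a) has_integral pi0 \<omega> b o\<^sub>L a) {0..1}"
      using has_integral_linear[OF pi0_has_integral[OF \<open>b \<in> B\<close>] blinfun_compose.bounded_linear_left]
      by (simp add: o_def)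
    moreover have "((\<lambda>t. a o\<^sub>L \<omega> t b) has_integral a o\<^sub>L pi0 \<omega> b) {0..1}"
      using has_integral_linear[OF pi0_has_integral[OF \<open>b \<in> B\<close>] blinfun_compose.bounded_linear_right]
      by (simp add: o_def)
    moreover have "\<omega> t b o\<^sub>L a = a o\<^sub>L \<omega> t b" for t
      using assms(2) \<open>a \<in> S\<close> unfolding commutant_def by blast
    ultimately show ?thesis
      using has_integral_unique by auto
  qed
  then show ?thesis
    using pi0_mem[OF \<open>b \<in> B\<close>] star_subalgebra_subset_BH[OF B_subalgebra]
    unfolding commutant_def by blast
qed

lemma pi0_fixed_commutant_Int:
  assumes "S \<subseteq> B" and "\<And>t. \<omega> t ` S \<subseteq> S" and b: "b \<in> commutant J S \<inter> B"
  shows "pi0 \<omega> b \<in> (commutant J S \<inter> B) \<inter> fixed_points \<omega> B"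
proof -
  have "\<omega> t b \<in> commutant J S" for t
    using commutant_Int_invariant[OF assms] by blast
  then show ?thesis
    using b pi0_commutant pi0_mem pi0_fixed by simp
qed

end

theorem proposition2p3:
  fixes J :: "'h::{real_inner,complete_space} \<Rightarrow>\<^sub>L 'h"
    and B A :: "('h \<Rightarrow>\<^sub>L 'h) set"
    and \<omega> :: "real \<Rightarrow> ('h \<Rightarrow>\<^sub>L 'h) \<Rightarrow> ('h \<Rightarrow>\<^sub>L 'h)"
  assumes "complex_structure J"
    and "cstar_dynamical_system J B \<omega>"
    and "maximal_abelian_invariant J B \<omega> A"
  shows "pi0 \<omega> ` (commutant J A \<inter> B) \<subseteq> A"
proof -
  interpret cstar_dynamics J B \<omega>
    by (rule cstar_dynamics.intro) (rule assms(2))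
  have A: "star_subalgebra J A" "A \<subseteq> B" "\<And>t. \<omega> t ` A \<subseteq> A"
    using assms(3) unfolding maximal_abelian_invariant_def abelian_invariant_def by blast+
  let ?F = "(commutant J A \<inter> B) \<inter> fixed_points \<omega> B"
  have "?F \<subseteq> A"
  proof (rule star_subalgebra_subset_if_selfadjoint_subset[OF assms(1) _ A(1)])
    show "star_subalgebra J ?F"
      using star_subalgebra_subset_BH[OF A(1)] star_subalgebra_adj[OF A(1)]
      by (intro star_subalgebra_Int star_subalgebra_commutant_Int[OF B_subalgebra]
          star_subalgebra_fixed_points) auto
    show "x \<in> A" if "x \<in> ?F" and "adj x = x" for x
      using that by (intro maximal_abelian_invariant_selfadjoint_mem[OF assms(3)]) auto
  qed
  moreover have "pi0 \<omega> ` (commutant J A \<inter> B) \<subseteq> ?F"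
    using pi0_fixed_commutant_Int[OF A(2,3)] by blast
  ultimately show ?thesis
    by blast
qed

end
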